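(* Let $\mathcal{H}$ be a complex linear space with a Hermitian sesquilinear form $[\cdot,\cdot]$, and suppose $\mathcal{H}=\operatorname{span}\{f_n\}_{n=1}^\infty$ (finite linear combinations), where $[f_n,f_m]=0$ for $n\neq m$, $[f_n,f_n]\neq 0$ for all $n$, and there exist indices $n,m$ with $[f_n,f_n]>0$ and $[f_m,f_m]<0$. Let $\mathcal{F}_{++}=\{f\in\mathcal{H}:[f,f]>0\}$. Let $W$ be the linear operator on $\mathcal{H}$ defined by $Wf_n=\mu_nf_n$, where $\mu_n\in\mathbb{C}$, $\mu_n\neq0$. Then the following are equivalent: (i) $W$ maps $\mathcal{F}_{++}$ onto $\mathcal{F}_{++}$ in a one-to-one manner; (ii) there exists $c>0$ such that $|\mu_n|=c$ for all $n\in\mathbb{N}$. *)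

theory Defs
  imports Complex_Main
begin

text \<open>A complex linear space is rendered as a type 'a of class ab_group_add together with
  a scalar multiplication sc :: complex => 'a => 'a satisfying the library locale
  vector_space sc (HOL.Vector_Spaces).\<close>

definition hermitian_sesq ::
  "(complex \<Rightarrow> 'a::ab_group_add \<Rightarrow> 'a) \<Rightarrow> ('a \<Rightarrow> 'a \<Rightarrow> complex) \<Rightarrow> bool" where
  "hermitian_sesq sc B \<longleftrightarrow>
     (\<forall>x y z. B (x + y) z = B x z + B y z) \<and>
     (\<forall>c x y. B (sc c x) y = c * B x y) \<and>
     (\<forall>x y. B y x = cnj (B x y))"

text \<open>Positive cone F_{++}; [f,f] is real for a Hermitian form, so we compare its real part.\<close>
definition pos_cone :: "('a \<Rightarrow> 'a \<Rightarrow> complex) \<Rightarrow> 'a set" where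
  "pos_cone B = {x. Re (B x x) > 0}"

end

theory Submission
  imports Defs
begin

text \<open>The form is diagonal in the basis f, so a diagonal operator W rescales [f n, f n] by
  |\<mu> n|^2. If the moduli agree, W multiplies the whole form by a positive constant and is
  therefore a bijection of the positive cone. Conversely, take f i positive and f j negative:
  the vectors a f i + f j sweep out every ratio |a|^2 [f i, f i] : -[f j, f j], and W preserves
  positivity of all of them only if |\<mu> j| \<le> |\<mu> i|; applying the same argument to the inverse
  of W, which is the diagonal operator with multipliers 1 / \<mu> n, gives equality.\<close>

lemma ratio_le_if_positivity_preserved:
  fixes P N u v :: real
  assumes "P > 0" "N > 0" "u \<ge> 0"
    and preserved: "\<And>s. s \<ge> 0 \<Longrightarrow> s * P > N \<Longrightarrow> s * u * P > v * N"
  shows "v \<le> u"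
proof (rule ccontr)
  assume "\<not> v \<le> u"
  then have "u + v > 0" "v > 0"
    using \<open>u \<ge> 0\<close> by auto
  define t where "t = 2 * v / (u + v)"
  have "t > 1" and "u * t \<le> v"
    using \<open>u + v > 0\<close> \<open>\<not> v \<le> u\<close> by (simp_all add: t_def field_simps)
  define s where "s = t * N / P"
  have "s \<ge> 0" and "s * P > N" and "s * u * P \<le> v * N"
    using assms \<open>t > 1\<close> \<open>u * t \<le> v\<close> by (simp_all add: s_def field_simps mult_left_mono)
  with preserved show False
    by fastforce
qed

locale hermitian_form =
  fixes sc :: "complex \<Rightarrow> 'a::ab_group_add \<Rightarrow> 'a"
    and B :: "'a \<Rightarrow> 'a \<Rightarrow> complex"
  assumes hermitian: "hermitian_sesq sc B"
begin

lemma add_left: "B (x + y) z = B x z + B y z"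
  using hermitian unfolding hermitian_sesq_def by blast

lemma scale_left: "B (sc c x) y = c * B x y"
  using hermitian unfolding hermitian_sesq_def by blast

lemma cnj_swap: "B y x = cnj (B x y)"
  using hermitian unfolding hermitian_sesq_def by blast

lemma add_right: "B x (y + z) = B x y + B x z"
  by (metis add_left cnj_swap complex_cnj_add)

lemma scale_right: "B x (sc c y) = cnj c * B x y"
  by (metis scale_left cnj_swap complex_cnj_mult)

lemma zero_left [simp]: "B 0 y = 0"
  using add_left[of 0 0 y] by simp

lemma zero_right [simp]: "B y 0 = 0"
  by (metis zero_left cnj_swap complex_cnj_zero)

lemma Im_diag [simp]: "Im (B x x) = 0"
  using cnj_swap[of x x] by (metis cnj.sel(2) equal_neg_zero)

lemmas sesq_simps = add_left scale_left add_right scale_right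

end

locale orthogonal_basis = vector_space sc + hermitian_form sc B
  for sc :: "complex \<Rightarrow> 'a::ab_group_add \<Rightarrow> 'a" and B +
  fixes f :: "nat \<Rightarrow> 'a"
  assumes span_basis: "span (range f) = UNIV"
    and orth: "\<And>n m. n \<noteq> m \<Longrightarrow> B (f n) (f m) = 0"
    and nondeg: "\<And>n. B (f n) (f n) \<noteq> 0"
begin

lemma in_span_basis: "x \<in> span (range f)"
  using span_basis by simp

lemma basis_sign_cases: "Re (B (f n) (f n)) > 0 \<or> Re (B (f n) (f n)) < 0"
proof -
  have "Re (B (f n) (f n)) \<noteq> 0"
    using nondeg[of n] Im_diag[of "f n"] by (simp add: complex_eq_iff)
  then show ?thesis
    by linarith
qed

lemma form_sum_left:
  "finite T \<Longrightarrow> B (\<Sum>a\<in>T. sc (r a) a) y = (\<Sum>a\<in>T. r a * B a y)"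
  by (induct T rule: finite_induct) (simp_all add: sesq_simps)

lemma eq_0_if_orthogonal_to_basis:
  assumes "\<And>m. B z (f m) = 0"
  shows "z = 0"
proof -
  obtain t r where t: "finite t" "t \<subseteq> range f" and z: "z = (\<Sum>a\<in>t. sc (r a) a)"
    using in_span_basis[of z] unfolding span_explicit by blast
  have "r (f m) = 0" if "f m \<in> t" for m
  proof -
    have "B a (f m) = 0" if a: "a \<in> t - {f m}" for a
    proof -
      obtain n where "a = f n" "n \<noteq> m"
        using a t by blast
      then show ?thesis
        by (simp add: orth)
    qed
    then have "(\<Sum>a\<in>t - {f m}. r a * B a (f m)) = 0"
      by (simp add: sum.neutral)
    then have "(\<Sum>a\<in>t. r a * B a (f m)) = r (f m) * B (f m) (f m)"
      by (simp add: sum.remove[OF t(1) that])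
    moreover have "(\<Sum>a\<in>t. r a * B a (f m)) = 0"
      using assms[of m] form_sum_left[OF t(1)] z by simp
    ultimately show ?thesis
      using nondeg[of m] by simp
  qed
  with t z show ?thesis
    by (auto intro!: sum.neutral)
qed

lemma Re_form_basis_pair:
  assumes "i \<noteq> j"
  shows "Re (B (sc a (f i) + sc b (f j)) (sc a (f i) + sc b (f j)))
    = (cmod a)\<^sup>2 * Re (B (f i) (f i)) + (cmod b)\<^sup>2 * Re (B (f j) (f j))"
proof -
  have "B (sc a (f i) + sc b (f j)) (sc a (f i) + sc b (f j))
      = (a * cnj a) * B (f i) (f i) + (b * cnj b) * B (f j) (f j)"
    using orth assms by (simp add: sesq_simps algebra_simps)
  then show ?thesis
    by (simp flip: complex_norm_square)
qed

lemma pair_multiplier_le: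
  assumes i: "Re (B (f i) (f i)) > 0" and j: "Re (B (f j) (f j)) < 0"
    and preserves: "\<And>a b. sc a (f i) + sc b (f j) \<in> pos_cone B \<Longrightarrow>
      sc (a * c) (f i) + sc (b * d) (f j) \<in> pos_cone B"
  shows "cmod d \<le> cmod c"
proof -
  have ij: "i \<noteq> j"
    using i j by auto
  have "(cmod d)\<^sup>2 \<le> (cmod c)\<^sup>2"
  proof (rule ratio_le_if_positivity_preserved)
    fix s :: real
    assume s: "s \<ge> 0" "s * Re (B (f i) (f i)) > - Re (B (f j) (f j))"
    define a where "a = complex_of_real (sqrt s)"
    have a: "(cmod a)\<^sup>2 = s"
      using s by (simp add: a_def)
    have "sc a (f i) + sc 1 (f j) \<in> pos_cone B"
      using s a Re_form_basis_pair[OF ij, of a 1] by (simp add: pos_cone_def)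
    then have "sc (a * c) (f i) + sc (1 * d) (f j) \<in> pos_cone B"
      by (rule preserves)
    then show "s * (cmod c)\<^sup>2 * Re (B (f i) (f i)) > (cmod d)\<^sup>2 * - Re (B (f j) (f j))"
      using a Re_form_basis_pair[OF ij, of "a * c" "1 * d"]
      by (simp add: pos_cone_def norm_mult power_mult_distrib algebra_simps)
  qed (use i j in auto)
  then show ?thesis
    by (simp add: power2_le_iff_abs_le)
qed

end

locale diagonal_operator = orthogonal_basis sc B f + W: Vector_Spaces.linear sc sc W
  for sc :: "complex \<Rightarrow> 'a::ab_group_add \<Rightarrow> 'a" and B f and W :: "'a \<Rightarrow> 'a" +
  fixes \<mu> :: "nat \<Rightarrow> complex"
  assumes W_basis: "\<And>n. W (f n) = sc (\<mu> n) (f n)"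
    and multiplier_nonzero: "\<And>n. \<mu> n \<noteq> 0"
begin

lemma form_image_basis_right: "B (W x) (f m) = \<mu> m * B x (f m)"
  using in_span_basis[of x]
proof (induct rule: span_induct_alt)
  case base
  then show ?case
    by (simp add: W.zero)
next
  case (step c y x)
  then obtain n where n: "y = f n"
    by auto
  have "B (W (sc c y + x)) (f m) = c * (\<mu> n * B (f n) (f m)) + \<mu> m * B x (f m)"
    using step by (simp add: W.add W.scale W_basis n sesq_simps)
  also have "\<dots> = \<mu> m * B (sc c y + x) (f m)"
    by (cases "n = m") (simp_all add: n sesq_simps orth algebra_simps)
  finally show ?case .
qed

lemma inj_W: "inj W"
  unfolding W.inj_iff_eq_0
proof (intro allI impI eq_0_if_orthogonal_to_basis)
  fix x m
  assume "W x = 0"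
  then have "\<mu> m * B x (f m) = 0"
    using form_image_basis_right[of x m] by simp
  then show "B x (f m) = 0"
    using multiplier_nonzero[of m] by simp
qed

lemma surj_W: "surj W"
proof -
  have "y \<in> range W" for y
    using in_span_basis[of y]
  proof (induct rule: span_induct_alt)
    case base
    then show ?case
      by (metis W.zero rangeI)
  next
    case (step c z y)
    then obtain m x where "z = f m" "y = W x"
      by auto
    then have "W (sc (c / \<mu> m) (f m) + x) = sc c z + y"
      using multiplier_nonzero[of m] by (simp add: W.add W.scale W_basis)
    then show ?case
      by (metis rangeI)
  qed
  then show ?thesis
    by auto
qed

lemma W_basis_pair: "W (sc a (f i) + sc b (f j)) = sc (a * \<mu> i) (f i) + sc (b * \<mu> j) (f j)"
  by (simp add: W.add W.scale W_basis)

lemma cmod_multiplier_eq_if_bij_cone: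
  assumes bij: "bij_betw W (pos_cone B) (pos_cone B)"
    and i: "Re (B (f i) (f i)) > 0" and j: "Re (B (f j) (f j)) < 0"
  shows "cmod (\<mu> i) = cmod (\<mu> j)"
proof (rule antisym)
  show "cmod (\<mu> j) \<le> cmod (\<mu> i)"
  proof (rule pair_multiplier_le[OF i j])
    fix a b
    assume "sc a (f i) + sc b (f j) \<in> pos_cone B"
    then show "sc (a * \<mu> i) (f i) + sc (b * \<mu> j) (f j) \<in> pos_cone B"
      using bij W_basis_pair by (metis bij_betw_apply)
  qed
  have "cmod (inverse (\<mu> j)) \<le> cmod (inverse (\<mu> i))"
  proof (rule pair_multiplier_le[OF i j])
    fix a b
    let ?x = "sc (a * inverse (\<mu> i)) (f i) + sc (b * inverse (\<mu> j)) (f j)"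
    assume "sc a (f i) + sc b (f j) \<in> pos_cone B"
    moreover have "W ?x = sc a (f i) + sc b (f j)"
      using multiplier_nonzero[of i] multiplier_nonzero[of j] by (simp add: W_basis_pair mult.assoc)
    ultimately show "?x \<in> pos_cone B"
      using bij inj_W by (metis bij_betw_imp_surj_on image_iff injD)
  qed
  then show "cmod (\<mu> i) \<le> cmod (\<mu> j)"
    using multiplier_nonzero[of i] multiplier_nonzero[of j] by (simp add: norm_inverse)
qed

lemma const_modulus_if_bij_cone:
  assumes bij: "bij_betw W (pos_cone B) (pos_cone B)"
    and i: "Re (B (f i) (f i)) > 0" and j: "Re (B (f j) (f j)) < 0"
  shows "\<exists>c>0. \<forall>n. cmod (\<mu> n) = c"
proof (intro exI conjI allI)
  show "cmod (\<mu> j) > 0"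
    using multiplier_nonzero by simp
  show "cmod (\<mu> n) = cmod (\<mu> j)" for n
    using basis_sign_cases[of n] cmod_multiplier_eq_if_bij_cone[OF bij _ j]
      cmod_multiplier_eq_if_bij_cone[OF bij i] cmod_multiplier_eq_if_bij_cone[OF bij i j]
    by metis
qed

lemma form_image_basis: "B (W x) (W (f m)) = (cmod (\<mu> m))\<^sup>2 * B x (f m)"
  using complex_norm_square[of "\<mu> m"]
  by (simp add: W_basis sesq_simps form_image_basis_right mult.commute)

lemma form_image_if_const_modulus:
  assumes "\<And>n. cmod (\<mu> n) = c"
  shows "B (W x) (W y) = c\<^sup>2 * B x y"
  using in_span_basis[of y]
proof (induct rule: span_induct_alt)
  case base
  then show ?case
    by (simp add: W.zero)
next
  case (step d z y)
  then obtain m where "z = f m"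
    by auto
  with step show ?case
    using form_image_basis[of x m] by (simp add: assms W.add W.scale sesq_simps algebra_simps)
qed

lemma bij_cone_if_const_modulus:
  assumes "c > 0" and "\<And>n. cmod (\<mu> n) = c"
  shows "bij_betw W (pos_cone B) (pos_cone B)"
proof (rule bij_betw_subset)
  show "bij_betw W UNIV UNIV"
    using inj_W surj_W by (simp add: bij_def)
  have "W x \<in> pos_cone B \<longleftrightarrow> x \<in> pos_cone B" for x
    using form_image_if_const_modulus[OF assms(2), of x x] \<open>c > 0\<close>
    by (simp add: pos_cone_def zero_less_mult_iff)
  with surj_W show "W ` pos_cone B = pos_cone B"
    by (auto simp: image_iff) (metis surj_def)
qed simp

end

theorem proposition2p5:
  fixes sc :: "complex \<Rightarrow> 'a::ab_group_add \<Rightarrow> 'a"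
    and B :: "'a \<Rightarrow> 'a \<Rightarrow> complex"
    and f :: "nat \<Rightarrow> 'a"
    and \<mu> :: "nat \<Rightarrow> complex"
    and W :: "'a \<Rightarrow> 'a"
  assumes vs: "vector_space sc"
    and herm: "hermitian_sesq sc B"
    and span: "module.span sc (range f) = UNIV"
    and orth: "\<And>n m. n \<noteq> m \<Longrightarrow> B (f n) (f m) = 0"
    and nondeg: "\<And>n. B (f n) (f n) \<noteq> 0"
    and pos: "\<exists>n. Re (B (f n) (f n)) > 0"
    and neg: "\<exists>m. Re (B (f m) (f m)) < 0"
    and mu_nz: "\<And>n. \<mu> n \<noteq> 0"
    and W_lin: "Vector_Spaces.linear sc sc W"
    and W_f: "\<And>n. W (f n) = sc (\<mu> n) (f n)"
  shows "bij_betw W (pos_cone B) (pos_cone B) \<longleftrightarrow> (\<exists>c>0. \<forall>n. cmod (\<mu> n) = c)"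
proof -
  interpret diagonal_operator sc B f W \<mu>
    by (intro diagonal_operator.intro orthogonal_basis.intro hermitian_form.intro
        orthogonal_basis_axioms.intro diagonal_operator_axioms.intro) (fact assms)+
  obtain i j where "Re (B (f i) (f i)) > 0" "Re (B (f j) (f j)) < 0"
    using pos neg by blast
  then show ?thesis
    using const_modulus_if_bij_cone bij_cone_if_const_modulus by blast
qed

end
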